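(* Let $p$ be a prime and $G$ a finite Abelian $p$-group. Then $\operatorname{rank}K(G\times C_p)-\operatorname{rank}K(G,C_p)=\operatorname{rank}B(G)-1$, where $\operatorname{rank}B(G)$ is the number of subgroups of $G$.
   Context: $B(\Pi)$ is the Burnside ring of a finite group $\Pi$ (for $\Pi$ Abelian, free with basis the subgroups $S\le\Pi$, corresponding to $\Pi/S$); $f_\Pi:B(\Pi)\to R_{\mathbb Q}(\Pi)$, $S\mapsto[\mathbb Q[\Pi/S]]$, and $K(\Pi)=\ker f_\Pi$ (Brauer relations). For $K\le G$ and a homomorphism $\rho:K\to C_p$, the graph is $K\times\rho=\{(k,\rho(k))\}\le G\times C_p$; $B(G,C_p)\subset B(G\times C_p)$ is spanned by all graphs, and $K(G,C_p)=K(G\times C_p)\cap B(G,C_p)$. *)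

theory Defs
  imports "HOL-Algebra.Algebra" "HOL-Computational_Algebra.Primes"
begin

text \<open>The set of subgroups of a group (the standard basis of the Burnside ring
  of an Abelian group).\<close>
definition subgroups :: "('a, 'm) monoid_scheme \<Rightarrow> 'a set set" where
  "subgroups G = {H. subgroup H G}"

text \<open>Elements of the Burnside ring B(G) (G Abelian): integer combinations of the
  basis elements G/S, S a subgroup; represented by their coefficient functions.\<close>
definition burnside :: "('a, 'm) monoid_scheme \<Rightarrow> ('a set \<Rightarrow> int) set" where
  "burnside G = {a. \<forall>S. S \<notin> subgroups G \<longrightarrow> a S = 0}"

text \<open>Character of the permutation representation Q[G/S] at g: the number of
  (left) cosets xS fixed by g.\<close>
definition perm_char :: "('a, 'm) monoid_scheme \<Rightarrow> 'a set \<Rightarrow> 'a \<Rightarrow> nat" where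
  "perm_char G S g =
     card {C \<in> (\<lambda>x. l_coset G x S) ` carrier G. l_coset G g C = C}"

text \<open>Brauer relations K(G) = ker (f_G : B(G) \<rightarrow> R_Q(G)).  Since rational
  representations are determined up to isomorphism by their characters, the
  class sum_S a_S [Q[G/S]] vanishes in R_Q(G) iff the corresponding virtual
  character vanishes.\<close>
definition brauer_relations :: "('a, 'm) monoid_scheme \<Rightarrow> ('a set \<Rightarrow> int) set" where
  "brauer_relations G = {a \<in> burnside G.
      \<forall>g \<in> carrier G. (\<Sum>S \<in> subgroups G. a S * int (perm_char G S g)) = 0}"

definition graph_subgroups ::
    "('a, 'm) monoid_scheme \<Rightarrow> ('b, 'n) monoid_scheme \<Rightarrow> ('a \<times> 'b) set set" where
  "graph_subgroups G H = {{(k, \<rho> k) | k. k \<in> K} | K \<rho>.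
      subgroup K G \<and> \<rho> \<in> hom (G\<lparr>carrier := K\<rparr>) H}"

definition burnside_graph ::
    "('a, 'm) monoid_scheme \<Rightarrow> ('b, 'n) monoid_scheme \<Rightarrow> (('a \<times> 'b) set \<Rightarrow> int) set" where
  "burnside_graph G H = {a \<in> burnside (G \<times>\<times> H).
      \<forall>S. S \<notin> graph_subgroups G H \<longrightarrow> a S = 0}"

definition brauer_relations_graph ::
    "('a, 'm) monoid_scheme \<Rightarrow> ('b, 'n) monoid_scheme \<Rightarrow> (('a \<times> 'b) set \<Rightarrow> int) set" where
  "brauer_relations_graph G H = brauer_relations (G \<times>\<times> H) \<inter> burnside_graph G H"

definition z_indep :: "('b \<Rightarrow> int) set \<Rightarrow> bool" where
  "z_indep S = (\<forall>c. (\<forall>x. (\<Sum>v\<in>S. c v * v x) = 0) \<longrightarrow> (\<forall>v\<in>S. c v = 0))"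

definition zrank :: "('b \<Rightarrow> int) set \<Rightarrow> nat" where
  "zrank K = Max {card S | S. S \<subseteq> K \<and> finite S \<and> z_indep S}"

end

theory Submission
  imports Defs
begin

text \<open>Every subgroup of $G \<times> C_p$ either contains the central factor $1 \<times> C_p$, and is then
  $K \<times> C_p$ for a unique $K \<le> G$, or meets it trivially, and is then the graph of a
  homomorphism $K \<rightarrow> C_p$. So $K(G, C_p)$ consists of the Brauer relations vanishing at all
  $K \<times> C_p$. For an Abelian group the permutation character of $\<Pi>/S$ is $[\<Pi> : S]$ times the
  indicator of $S$, so relations are the integer relations among the functions $|S| \<cdot> 1_S$.
  Evaluating at a generator of $1 \<times> C_p$ shows that a relation vanishing at every $K \<times> C_p$
  with $K \<noteq> 1$ also vanishes at $1 \<times> C_p$. Conversely, for $K \<noteq> 1$ and $T = K \<times> C_p$,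
  the subgroups of $T$ avoiding $1 \<times> C_p$ cover exactly the identity and the elements of $T$
  outside $1 \<times> C_p$ (here we use that $G$ is a $p$-group), and inclusion-exclusion over them
  yields a relation that is nonzero at $T$ but vanishes at every other $K' \<times> C_p$. Hence
  restricting to the coordinates $K \<times> C_p$, $K \<noteq> 1$, maps $K(G \<times> C_p)$ onto a lattice of
  full rank with kernel $K(G, C_p)$.\<close>

section \<open>Ranks of lattices of integer-valued functions\<close>

definition z_indep_family :: "'i set \<Rightarrow> ('i \<Rightarrow> 'b \<Rightarrow> int) \<Rightarrow> bool" where
  "z_indep_family I v \<longleftrightarrow> (\<forall>c. (\<forall>x. (\<Sum>i\<in>I. c i * v i x) = 0) \<longrightarrow> (\<forall>i\<in>I. c i = 0))"

lemma z_indep_familyD: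
  "z_indep_family I v \<Longrightarrow> (\<And>x. (\<Sum>i\<in>I. c i * v i x) = 0) \<Longrightarrow> i \<in> I \<Longrightarrow> c i = 0"
  unfolding z_indep_family_def by blast

lemma z_indepD: "z_indep S \<Longrightarrow> (\<And>x. (\<Sum>f\<in>S. c f * f x) = 0) \<Longrightarrow> f \<in> S \<Longrightarrow> c f = 0"
  unfolding z_indep_def by blast

lemma z_indep_empty [simp]: "z_indep {}"
  by (simp add: z_indep_def)

lemma zero_notin_z_indep:
  assumes "z_indep S"
  shows "(\<lambda>_. 0) \<notin> S"
proof
  assume zero: "(\<lambda>_. 0) \<in> S"
  have "(\<Sum>f\<in>S. of_bool (f = (\<lambda>_. 0)) * f x) = 0" for x
    by (rule sum.neutral) auto
  from z_indepD[OF assms this zero] show False by simp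
qed

lemma z_indep_family_inj_on:
  assumes "z_indep_family I v"
  shows "inj_on v I"
proof
  fix i j assume ij: "i \<in> I" "j \<in> I" "v i = v j"
  show "i = j"
  proof (rule ccontr)
    assume "i \<noteq> j"
    let ?c = "\<lambda>k. of_bool (k = i) - of_bool (k = j) :: int"
    have "(\<Sum>k\<in>I. ?c k * v k x) = 0" for x
    proof (cases "finite I")
      case True
      have "?c k * v k x = (if k = i then v k x else 0) - (if k = j then v k x else 0)" for k
        by simp
      then show ?thesis
        using ij True by (simp add: sum_subtractf)
    qed simp
    from z_indep_familyD[OF assms this \<open>i \<in> I\<close>] \<open>i \<noteq> j\<close> show False by simp
  qed
qed

lemma z_indep_image:
  assumes "z_indep_family I v"
  shows "z_indep (v ` I)"
  unfolding z_indep_def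
proof (intro allI impI ballI)
  fix c f assume sum0: "\<forall>x. (\<Sum>g\<in>v ` I. c g * g x) = 0" and "f \<in> v ` I"
  then obtain i where "i \<in> I" "f = v i" by blast
  have "(\<Sum>k\<in>I. c (v k) * v k x) = 0" for x
    using sum0 z_indep_family_inj_on[OF assms] by (simp add: sum.reindex)
  from z_indep_familyD[OF assms this \<open>i \<in> I\<close>] show "c f = 0" using \<open>f = v i\<close> by simp
qed

lemma z_indep_family_Plus_diagonal:
  assumes "z_indep S" "finite S" "finite P" "\<And>f T. f \<in> S \<Longrightarrow> T \<in> P \<Longrightarrow> f T = 0"
    and "\<And>T. T \<in> P \<Longrightarrow> e T T \<noteq> 0" "\<And>T T'. T \<in> P \<Longrightarrow> T' \<in> P - {T} \<Longrightarrow> e T T' = 0"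
  shows "z_indep_family (S <+> P) (case_sum (\<lambda>f. f) e)"
  unfolding z_indep_family_def
proof (intro allI impI ballI)
  fix c i
  assume sum0: "\<forall>x. (\<Sum>i\<in>S <+> P. c i * case_sum (\<lambda>f. f) e i x) = 0" and i: "i \<in> S <+> P"
  have split: "(\<Sum>i\<in>S <+> P. c i * case_sum (\<lambda>f. f) e i x)
      = (\<Sum>f\<in>S. c (Inl f) * f x) + (\<Sum>T\<in>P. c (Inr T) * e T x)" for x
    using assms(2,3) by (simp add: sum.Plus)
  have c_Inr: "c (Inr T) = 0" if T: "T \<in> P" for T
  proof -
    have "(\<Sum>f\<in>S. c (Inl f) * f T) = 0"
      using assms(4) T by (simp add: sum.neutral)
    moreover have "(\<Sum>T'\<in>P - {T}. c (Inr T') * e T' T) = 0"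
      using assms(6) T by (intro sum.neutral) auto
    then have "(\<Sum>T'\<in>P. c (Inr T') * e T' T) = c (Inr T) * e T T"
      using assms(3) T by (simp add: sum.remove)
    ultimately show ?thesis
      using sum0 split[of T] assms(5)[OF T] by simp
  qed
  have Inr_part: "(\<Sum>T\<in>P. c (Inr T) * e T x) = 0" for x
    using c_Inr by simp
  have Inl_part: "(\<Sum>f\<in>S. c (Inl f) * f x) = 0" for x
    using Inr_part[of x] spec[OF sum0, of x] split[of x] by linarith
  have c_Inl: "c (Inl f) = 0" if "f \<in> S" for f
    using z_indepD[OF assms(1), of "\<lambda>f. c (Inl f)", OF Inl_part that] .
  show "c i = 0"
    using i c_Inl c_Inr by (cases i) auto
qed

lemma z_indep_family_pivot:
  assumes "z_indep S" "finite S" "v0 \<in> S" "v0 y \<noteq> 0"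
  shows "z_indep_family (S - {v0}) (\<lambda>v x. v0 y * v x - v y * v0 x)"
  unfolding z_indep_family_def
proof (intro allI impI ballI)
  fix d u
  assume sum0: "\<forall>x. (\<Sum>v\<in>S - {v0}. d v * (v0 y * v x - v y * v0 x)) = 0" and u: "u \<in> S - {v0}"
  define c where "c v = (if v = v0 then - (\<Sum>w\<in>S - {v0}. d w * w y) else d v * v0 y)" for v
  have "(\<Sum>v\<in>S. c v * v x) = 0" for x
  proof -
    have "(\<Sum>v\<in>S. c v * v x) = c v0 * v0 x + (\<Sum>v\<in>S - {v0}. c v * v x)"
      using assms(2,3) by (simp add: sum.remove)
    also have "\<dots> = (\<Sum>v\<in>S - {v0}. d v * (v0 y * v x - v y * v0 x))"
      by (simp add: c_def sum_distrib_left sum_distrib_right sum_subtractf algebra_simps)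
    finally show ?thesis using sum0 by simp
  qed
  from z_indepD[OF assms(1) this] u have "c u = 0" by blast
  then show "d u = 0" using u assms(4) by (simp add: c_def)
qed

locale z_submodule =
  fixes M :: "('b \<Rightarrow> int) set" and Y :: "'b set"
  assumes lincomb_closed: "v \<in> M \<Longrightarrow> w \<in> M \<Longrightarrow> (\<lambda>x. a * v x - b * w x) \<in> M"
    and finite_coords: "finite Y"
    and vanishes_outside: "f \<in> M \<Longrightarrow> x \<notin> Y \<Longrightarrow> f x = 0"
begin

lemma z_submodule_vanishing: "z_submodule {f \<in> M. \<forall>y\<in>P. f y = 0} Y"
proof
  fix v w a b assume "v \<in> {f \<in> M. \<forall>y\<in>P. f y = 0}" "w \<in> {f \<in> M. \<forall>y\<in>P. f y = 0}"
  then show "(\<lambda>x. a * v x - b * w x) \<in> {f \<in> M. \<forall>y\<in>P. f y = 0}"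
    by (simp add: lincomb_closed)
qed (simp_all add: finite_coords vanishes_outside)

lemma eliminate_coordinate:
  assumes "S \<subseteq> M" "finite S" "z_indep S"
  obtains S' where "S' \<subseteq> M" "finite S'" "z_indep S'" "\<forall>f\<in>S'. f y = 0"
    "card S \<le> card S' + 1"
proof (cases "\<forall>v\<in>S. v y = 0")
  case True
  then show ?thesis using assms by (intro that[of S]) auto
next
  case False
  then obtain v0 where v0: "v0 \<in> S" "v0 y \<noteq> 0" by blast
  define \<phi> where "\<phi> = (\<lambda>v x. v0 y * v x - v y * v0 x)"
  have indep: "z_indep_family (S - {v0}) \<phi>"
    unfolding \<phi>_def by (rule z_indep_family_pivot[OF assms(3,2) v0])
  show ?thesis
  proof (rule that)
    have "\<phi> v \<in> M" if "v \<in> S" for v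
      unfolding \<phi>_def using that v0(1) assms(1) by (intro lincomb_closed) auto
    then show "\<phi> ` (S - {v0}) \<subseteq> M" by blast
    show "card S \<le> card (\<phi> ` (S - {v0})) + 1"
      using card_image[OF z_indep_family_inj_on[OF indep]] card_Diff_singleton[OF v0(1)] by simp
    show "\<forall>f\<in>\<phi> ` (S - {v0}). f y = 0" by (simp add: \<phi>_def mult.commute)
    show "finite (\<phi> ` (S - {v0}))" using assms(2) by simp
    show "z_indep (\<phi> ` (S - {v0}))" using z_indep_image[OF indep] .
  qed
qed

lemma eliminate_coordinates:
  assumes "finite P" "S \<subseteq> M" "finite S" "z_indep S"
  obtains S' where "S' \<subseteq> {f \<in> M. \<forall>y\<in>P. f y = 0}" "finite S'" "z_indep S'"
    "card S \<le> card S' + card P"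
  using assms(1) that
proof (induction P arbitrary: thesis rule: finite_induct)
  case empty
  then show ?case using assms(2-4) by auto
next
  case (insert y P)
  obtain S1 where S1: "S1 \<subseteq> {f \<in> M. \<forall>y\<in>P. f y = 0}" "finite S1" "z_indep S1"
    "card S \<le> card S1 + card P"
    using insert.IH by blast
  interpret vanishing: z_submodule "{f \<in> M. \<forall>y\<in>P. f y = 0}" Y
    by (rule z_submodule_vanishing)
  obtain S2 where "S2 \<subseteq> {f \<in> M. \<forall>y\<in>P. f y = 0}" "finite S2" "z_indep S2"
    "\<forall>f\<in>S2. f y = 0" "card S1 \<le> card S2 + 1"
    using vanishing.eliminate_coordinate[OF S1(1-3)] by blast
  then show ?case
    using insert.prems S1(4) insert.hyps by (intro insert.prems[of S2]) auto
qed

lemma card_z_indep_le: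
  assumes "S \<subseteq> M" "finite S" "z_indep S"
  shows "card S \<le> card Y"
proof -
  obtain S' where S': "S' \<subseteq> {f \<in> M. \<forall>y\<in>Y. f y = 0}" "finite S'" "z_indep S'"
    "card S \<le> card S' + card Y"
    by (rule eliminate_coordinates[OF finite_coords assms])
  have "S' \<subseteq> {\<lambda>_. 0}"
    using S'(1) vanishes_outside by fastforce
  then have "S' = {}"
    using zero_notin_z_indep[OF S'(3)] by blast
  then show ?thesis using S'(4) by simp
qed

lemma finite_z_indep_cards: "finite {card S |S. S \<subseteq> M \<and> finite S \<and> z_indep S}"
  by (rule finite_subset[of _ "{..card Y}"]) (auto dest: card_z_indep_le)

lemma card_le_zrank:
  assumes "S \<subseteq> M" "finite S" "z_indep S"
  shows "card S \<le> zrank M"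
  unfolding zrank_def using assms by (intro Max_ge[OF finite_z_indep_cards]) blast

lemma obtain_z_basis:
  obtains S where "S \<subseteq> M" "finite S" "z_indep S" "card S = zrank M"
proof -
  have "zrank M \<in> {card S |S. S \<subseteq> M \<and> finite S \<and> z_indep S}"
    unfolding zrank_def by (rule Max_in[OF finite_z_indep_cards]) (use z_indep_empty in blast)
  then obtain S where "S \<subseteq> M" "finite S" "z_indep S" "zrank M = card S" by blast
  then show ?thesis using that[of S] by simp
qed

lemma zrank_le_zrank_vanishing_add_card:
  assumes "finite P"
  shows "zrank M \<le> zrank {f \<in> M. \<forall>y\<in>P. f y = 0} + card P"
proof -
  interpret vanishing: z_submodule "{f \<in> M. \<forall>y\<in>P. f y = 0}" Y
    by (rule z_submodule_vanishing)
  obtain S where S: "S \<subseteq> M" "finite S" "z_indep S" "card S = zrank M"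
    by (rule obtain_z_basis)
  obtain S' where S': "S' \<subseteq> {f \<in> M. \<forall>y\<in>P. f y = 0}" "finite S'" "z_indep S'"
    "card S \<le> card S' + card P"
    by (rule eliminate_coordinates[OF assms S(1-3)])
  have "card S' \<le> zrank {f \<in> M. \<forall>y\<in>P. f y = 0}"
    using S'(1-3) by (rule vanishing.card_le_zrank)
  then show ?thesis using S(4) S'(4) by linarith
qed

lemma zrank_vanishing_add_card_le:
  assumes "finite P"
    and witness: "\<And>T. T \<in> P \<Longrightarrow> \<exists>e\<in>M. e T \<noteq> 0 \<and> (\<forall>T'\<in>P - {T}. e T' = 0)"
  shows "zrank {f \<in> M. \<forall>y\<in>P. f y = 0} + card P \<le> zrank M"
proof -
  interpret vanishing: z_submodule "{f \<in> M. \<forall>y\<in>P. f y = 0}" Y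
    by (rule z_submodule_vanishing)
  obtain S where S: "S \<subseteq> {f \<in> M. \<forall>y\<in>P. f y = 0}" "finite S" "z_indep S"
    "card S = zrank {f \<in> M. \<forall>y\<in>P. f y = 0}"
    by (rule vanishing.obtain_z_basis)
  from witness have "\<forall>T\<in>P. \<exists>e. e \<in> M \<and> e T \<noteq> 0 \<and> (\<forall>T'\<in>P - {T}. e T' = 0)"
    by blast
  then obtain e where e: "\<forall>T\<in>P. e T \<in> M \<and> e T T \<noteq> 0 \<and> (\<forall>T'\<in>P - {T}. e T T' = 0)"
    by (rule bchoice[THEN exE])
  then have e_mem: "e T \<in> M" and e_diag: "e T T \<noteq> 0" if "T \<in> P" for T
    using that by blast+
  have e_off: "e T T' = 0" if "T \<in> P" "T' \<in> P - {T}" for T T'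
    using e that by blast
  let ?v = "case_sum (\<lambda>f. f) e"
  have indep: "z_indep_family (S <+> P) ?v"
  proof (rule z_indep_family_Plus_diagonal[OF S(3,2) assms(1)])
    show "f T = 0" if "f \<in> S" "T \<in> P" for f T
      using S(1) that by blast
  qed (fact e_diag e_off)+
  have "?v ` (S <+> P) \<subseteq> M"
  proof (rule image_subsetI)
    fix i assume "i \<in> S <+> P"
    then show "?v i \<in> M"
      using S(1) e_mem by (cases i) auto
  qed
  moreover have "finite (?v ` (S <+> P))"
    using S(2) assms(1) by simp
  ultimately have "card (?v ` (S <+> P)) \<le> zrank M"
    using z_indep_image[OF indep] by (rule card_le_zrank)
  moreover have "card (?v ` (S <+> P)) = card S + card P"
    using card_image[OF z_indep_family_inj_on[OF indep]] card_Plus[OF S(2) assms(1)] by simp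
  ultimately show ?thesis using S(4) by linarith
qed

theorem zrank_eq_zrank_vanishing_add_card:
  assumes "finite P"
    and "\<And>T. T \<in> P \<Longrightarrow> \<exists>e\<in>M. e T \<noteq> 0 \<and> (\<forall>T'\<in>P - {T}. e T' = 0)"
  shows "zrank M = zrank {f \<in> M. \<forall>y\<in>P. f y = 0} + card P"
  using zrank_le_zrank_vanishing_add_card[OF assms(1)] zrank_vanishing_add_card_le[OF assms]
  by linarith

end

section \<open>Brauer relations of finite Abelian groups\<close>

lemma finite_subgroups: "finite (carrier G) \<Longrightarrow> finite (subgroups G)"
  unfolding subgroups_def by (rule finite_subset[of _ "Pow (carrier G)"]) (auto dest: subgroup.subset)

lemma (in comm_group) l_coset_fixed_iff:
  assumes "subgroup S G" "g \<in> carrier G" "x \<in> carrier G"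
  shows "g <# (x <# S) = x <# S \<longleftrightarrow> g \<in> S"
proof -
  have S: "S \<subseteq> carrier G" using assms(1) by (rule subgroup.subset)
  have "g <# (x <# S) = x <# (g <# S)"
    using assms S by (simp add: lcos_m_assoc m_comm)
  moreover have "x <# (g <# S) = x <# S \<longleftrightarrow> g <# S = S"
  proof
    assume "x <# (g <# S) = x <# S"
    then have "inv x <# (x <# (g <# S)) = inv x <# (x <# S)" by simp
    then show "g <# S = S"
      using assms S by (simp add: lcos_m_assoc l_coset_subset_G m_assoc[symmetric] lcos_mult_one)
  qed simp
  moreover have "g <# S = S \<longleftrightarrow> g \<in> S"
  proof
    assume "g <# S = S"
    moreover have "g \<in> g <# S"
      using subgroup.one_closed[OF assms(1)] assms(2) unfolding l_coset_def by force
    ultimately show "g \<in> S" by simp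
  qed (rule coset_join3[OF assms(2,1)])
  ultimately show ?thesis by simp
qed

lemma (in comm_group) perm_char_mult_card:
  assumes "finite (carrier G)" "subgroup S G" "g \<in> carrier G"
  shows "perm_char G S g * card S = (if g \<in> S then order G else 0)"
proof -
  have "{C \<in> (\<lambda>x. x <# S) ` carrier G. g <# C = C} = (if g \<in> S then lcosets S else {})"
    using l_coset_fixed_iff[OF assms(2,3)] unfolding LCOSETS_def by auto
  then show ?thesis
    using l_lagrange[OF assms(1,2)] by (simp add: perm_char_def)
qed

lemma z_submodule_brauer_relations:
  assumes "finite (carrier G)"
  shows "z_submodule (brauer_relations G) (subgroups G)"
proof
  fix v w a b assume "v \<in> brauer_relations G" "w \<in> brauer_relations G"
  moreover have "(\<Sum>S\<in>subgroups G. (a * v S - b * w S) * int (perm_char G S g))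
      = a * (\<Sum>S\<in>subgroups G. v S * int (perm_char G S g))
        - b * (\<Sum>S\<in>subgroups G. w S * int (perm_char G S g))" for g
    by (simp add: sum_subtractf sum_distrib_left algebra_simps)
  ultimately show "(\<lambda>S. a * v S - b * w S) \<in> brauer_relations G"
    by (simp add: brauer_relations_def burnside_def)
qed (use assms finite_subgroups in \<open>auto simp: brauer_relations_def burnside_def\<close>)

lemma (in comm_group) brauer_relation_of_indicator_relation:
  assumes "finite (carrier G)" "b \<in> burnside G"
    and "\<And>g. g \<in> carrier G \<Longrightarrow> (\<Sum>S\<in>subgroups G. b S * of_bool (g \<in> S)) = 0"
  shows "(\<lambda>S. b S * int (card S)) \<in> brauer_relations G"
  unfolding brauer_relations_def
proof (intro CollectI conjI ballI)
  show "(\<lambda>S. b S * int (card S)) \<in> burnside G"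
    using assms(2) by (simp add: burnside_def)
  fix g assume g: "g \<in> carrier G"
  have "(\<Sum>S\<in>subgroups G. b S * int (card S) * int (perm_char G S g))
      = (\<Sum>S\<in>subgroups G. int (order G) * (b S * of_bool (g \<in> S)))"
  proof (rule sum.cong)
    fix S assume "S \<in> subgroups G"
    then have "int (perm_char G S g * card S) = int (if g \<in> S then order G else 0)"
      using perm_char_mult_card[OF assms(1) _ g] by (simp add: subgroups_def)
    then show "b S * int (card S) * int (perm_char G S g) = int (order G) * (b S * of_bool (g \<in> S))"
      by (simp add: algebra_simps split: if_splits)
  qed simp
  also have "\<dots> = 0"
    using assms(3)[OF g] by (simp flip: sum_distrib_left)
  finally show "(\<Sum>S\<in>subgroups G. b S * int (card S) * int (perm_char G S g)) = 0" .
qed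

lemma (in comm_group) brauer_relation_vanishes_at:
  assumes "finite (carrier G)" "f \<in> brauer_relations G" "subgroup H G" "g \<in> H"
    and "\<And>S. subgroup S G \<Longrightarrow> g \<in> S \<Longrightarrow> S \<noteq> H \<Longrightarrow> f S = 0"
  shows "f H = 0"
proof -
  have g: "g \<in> carrier G" using subgroup.subset[OF assms(3)] assms(4) by blast
  have pc_pos: "perm_char G S g \<noteq> 0" if "subgroup S G" "g \<in> S" for S
    using perm_char_mult_card[OF assms(1) that(1) g] that(2) order_gt_0_iff_finite assms(1)
    by (metis mult_is_0 not_less0)
  have "f S * int (perm_char G S g) = 0" if "S \<in> subgroups G - {H}" for S
  proof (cases "g \<in> S")
    case False
    then have "perm_char G S g = 0"
      using that perm_char_mult_card[OF assms(1) _ g, of S]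
        subgroup.finite_imp_card_positive[OF _ assms(1), of S]
      by (simp add: subgroups_def)
    then show ?thesis by simp
  qed (use that assms(5) in \<open>simp add: subgroups_def\<close>)
  then have "(\<Sum>S\<in>subgroups G. f S * int (perm_char G S g)) = f H * int (perm_char G H g)"
    using assms(3) finite_subgroups[OF assms(1)] by (simp add: sum.remove subgroups_def sum.neutral)
  moreover have "(\<Sum>S\<in>subgroups G. f S * int (perm_char G S g)) = 0"
    using assms(2) g by (simp add: brauer_relations_def)
  ultimately show ?thesis
    using pc_pos[OF assms(3,4)] by simp
qed

lemma indicator_Union_intersection_closed:
  fixes F :: "'x set set"
  assumes "finite F" and Int_closed: "\<And>H H'. H \<in> F \<Longrightarrow> H' \<in> F \<Longrightarrow> H \<inter> H' \<in> F"
  obtains w :: "'x set \<Rightarrow> int" where "\<And>x. of_bool (x \<in> \<Union>F) = (\<Sum>H\<in>F. w H * of_bool (x \<in> H))"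
proof -
  define \<B> where "\<B> = {B. B \<subseteq> F \<and> B \<noteq> {}}"
  have Inter_mem: "\<Inter>B \<in> F" if "B \<in> \<B>" for B
  proof -
    have "finite B" "B \<noteq> {}" "B \<subseteq> F"
      using that assms(1) finite_subset by (auto simp: \<B>_def)
    then show ?thesis
      by (induction B rule: finite_ne_induct) (auto intro: Int_closed)
  qed
  have "finite \<B>" using assms(1) by (simp add: \<B>_def)
  define w where "w H = (\<Sum>B\<in>{B \<in> \<B>. \<Inter>B = H}. (-1::int) ^ (card B + 1))" for H
  have "of_bool (x \<in> \<Union>F) = (\<Sum>H\<in>F. w H * of_bool (x \<in> H))" for x
  proof -
    have "of_bool (x \<in> \<Union>F) = (\<Sum>B\<in>\<B>. (-1) ^ (card B + 1) * of_bool (x \<in> \<Inter>B) :: int)"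
      unfolding \<B>_def by (rule Incl_Excl_Union) (auto simp: disjnt_def assms(1))
    also have "\<dots> = (\<Sum>H\<in>F. \<Sum>B\<in>{B \<in> \<B>. \<Inter>B = H}. (-1) ^ (card B + 1) * of_bool (x \<in> \<Inter>B))"
      by (rule sum.group[symmetric]) (use assms(1) \<open>finite \<B>\<close> Inter_mem in auto)
    also have "\<dots> = (\<Sum>H\<in>F. w H * of_bool (x \<in> H))"
      unfolding w_def sum_distrib_right by (intro sum.cong) auto
    finally show ?thesis .
  qed
  then show ?thesis using that by blast
qed

section \<open>Subgroups of $G \<times> C_p$\<close>

lemma DirProd_nat_pow:
  "(a, b) [^]\<^bsub>G \<times>\<times> H\<^esub> (n::nat) = (a [^]\<^bsub>G\<^esub> n, b [^]\<^bsub>H\<^esub> n)"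
  by (induction n) auto

lemma subgroup_nat_pow_closed: "subgroup S G \<Longrightarrow> x \<in> S \<Longrightarrow> x [^]\<^bsub>G\<^esub> (n::nat) \<in> S"
  by (induction n) (auto intro: subgroup.one_closed subgroup.m_closed)

lemma eq_graph_of_THE:
  assumes "\<And>a c c'. (a, c) \<in> S \<Longrightarrow> (a, c') \<in> S \<Longrightarrow> c = c'"
  shows "S = {(k, THE c. (k, c) \<in> S) | k. k \<in> fst ` S}"
proof -
  have the_mem: "(a, THE c. (a, c) \<in> S) \<in> S" if "(a, c) \<in> S" for a c
    using theI[of "\<lambda>c. (a, c) \<in> S" c] that assms by blast
  show ?thesis
  proof (intro equalityI subsetI)
    fix x assume "x \<in> S"
    moreover obtain a c where x: "x = (a, c)" by (cases x)
    ultimately have ac: "(a, c) \<in> S" by simp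
    then have "c = (THE c. (a, c) \<in> S)"
      using assms the_mem by blast
    moreover have "a \<in> fst ` S"
      using ac by (metis fst_conv image_eqI)
    ultimately show "x \<in> {(k, THE c. (k, c) \<in> S) | k. k \<in> fst ` S}"
      using x by blast
  next
    fix x assume "x \<in> {(k, THE c. (k, c) \<in> S) | k. k \<in> fst ` S}"
    then show "x \<in> S"
      using the_mem by force
  qed
qed

locale prime_cyclic_extension = group G for G :: "('a, 'm) monoid_scheme" (structure) +
  fixes p :: nat
  assumes prime_p: "Factorial_Ring.prime p"
begin

abbreviation Cp :: "int monoid" where "Cp \<equiv> integer_mod_group p"
abbreviation GCp :: "('a \<times> int) monoid" where "GCp \<equiv> G \<times>\<times> Cp"
abbreviation zeta :: "'a \<times> int" where "zeta \<equiv> (\<one>\<^bsub>G\<^esub>, 1)"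
abbreviation subgroups_over_Cp :: "('a \<times> int) set set"
  where "subgroups_over_Cp \<equiv> {S \<in> subgroups GCp. zeta \<in> S}"

definition Cp_factor :: "('a \<times> int) set" where "Cp_factor = {\<one>\<^bsub>G\<^esub>} \<times> carrier Cp"

lemma carrier_Cp: "carrier Cp = {0..<int p}"
  using prime_gt_0_nat[OF prime_p] by (simp add: carrier_integer_mod_group)

lemma one_in_carrier_Cp: "1 \<in> carrier Cp"
  using prime_p not_prime_1 integer_mod_group_1 by metis

lemma group_GCp: "group GCp"
  by (simp add: DirProd_group is_group)

lemma subgroup_mem_carrier: "subgroup S GCp \<Longrightarrow> (a, c) \<in> S \<Longrightarrow> a \<in> carrier G \<and> c \<in> carrier Cp"
  using subgroup.subset by fastforce

lemma fst_image_subgroup: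
  assumes "subgroup S GCp"
  shows "subgroup (fst ` S) G"
proof -
  have "fst \<in> hom GCp G"
    by (rule homI) (auto simp: mult_DirProd')
  then have "group_hom GCp G fst"
    by (simp add: group_hom_def group_hom_axioms_def group_GCp is_group)
  then show ?thesis
    using assms by (rule group_hom.subgroup_img_is_subgroup)
qed

lemma central_multiple_mem:
  assumes "subgroup S GCp" "(\<one>, d) \<in> S"
  shows "(\<one>, (int n * d) mod int p) \<in> S"
  using subgroup_nat_pow_closed[OF assms, of n] by (simp add: DirProd_nat_pow)

lemma zeta_mem_if_central_mem:
  assumes S: "subgroup S GCp" and d: "(\<one>, d) \<in> S" "d \<in> carrier Cp" "d \<noteq> 0"
  shows "zeta \<in> S"
proof -
  have "0 < nat d" "nat d < p" using d(2,3) by (auto simp: carrier_Cp)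
  then have "\<not> p dvd nat d" by (auto dest: dvd_imp_le)
  then have "coprime (nat d) p"
    using prime_imp_coprime[OF prime_p] coprime_commute by blast
  then obtain n m where "nat d * n = p * m + 1"
    using bezout_nat[of "nat d" p] \<open>0 < nat d\<close> by auto
  then have "(nat d * n) mod p = 1 mod p"
    by (metis add.commute mod_mult_self2)
  then have "int ((nat d * n) mod p) = 1"
    using prime_gt_1_nat[OF prime_p] by simp
  then have "(int n * d) mod int p = 1"
    using d(2) by (simp add: zmod_int mult.commute carrier_Cp)
  then show ?thesis using central_multiple_mem[OF S d(1), of n] by simp
qed

lemma subgroup_Cp_factor: "subgroup Cp_factor GCp"
  unfolding Cp_factor_def
  by (rule DirProd_subgroups[OF is_group triv_subgroup group_integer_mod_group
        group.subgroup_self[OF group_integer_mod_group]])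

lemma zeta_in_Cp_factor: "zeta \<in> Cp_factor"
  using one_in_carrier_Cp by (simp add: Cp_factor_def)

lemma Cp_factor_subset:
  assumes "subgroup S GCp" "zeta \<in> S"
  shows "Cp_factor \<subseteq> S"
proof
  fix x assume "x \<in> Cp_factor"
  then obtain c where "x = (\<one>, c)" "c \<in> carrier Cp" by (auto simp: Cp_factor_def)
  then show "x \<in> S"
    using central_multiple_mem[OF assms, of "nat c"] by (simp add: carrier_Cp)
qed

lemma subgroup_eq_Times_carrier_Cp:
  assumes S: "subgroup S GCp" and zeta: "zeta \<in> S"
  shows "S = fst ` S \<times> carrier Cp"
proof (intro equalityI subsetI)
  fix x assume "x \<in> S"
  then show "x \<in> fst ` S \<times> carrier Cp" using subgroup_mem_carrier[OF S] by (cases x) force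
next
  fix x assume "x \<in> fst ` S \<times> carrier Cp"
  then obtain a b c where abc: "x = (a, c)" "(a, b) \<in> S" "c \<in> carrier Cp" by force
  have "(c - b) mod int p \<in> carrier Cp"
    using prime_gt_0_nat[OF prime_p] by (simp add: carrier_Cp)
  then have "(\<one>, (c - b) mod int p) \<in> S"
    using Cp_factor_subset[OF S zeta] by (auto simp: Cp_factor_def)
  then have "(a, b) \<otimes>\<^bsub>GCp\<^esub> (\<one>, (c - b) mod int p) \<in> S"
    using subgroup.m_closed[OF S abc(2)] by blast
  moreover have "(a, b) \<otimes>\<^bsub>GCp\<^esub> (\<one>, (c - b) mod int p) = (a, c)"
    using subgroup_mem_carrier[OF S abc(2)] abc(3) by (simp add: mod_add_right_eq carrier_Cp)
  ultimately show "x \<in> S" using abc(1) by simp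
qed

lemma snd_unique_if_zeta_notin:
  assumes S: "subgroup S GCp" and zeta: "zeta \<notin> S" and ac: "(a, c) \<in> S" "(a, c') \<in> S"
  shows "c = c'"
proof (rule ccontr)
  assume "c \<noteq> c'"
  have carr: "a \<in> carrier G" "c \<in> carrier Cp" "c' \<in> carrier Cp"
    using subgroup_mem_carrier[OF S] ac by auto
  have "(a, c) \<otimes>\<^bsub>GCp\<^esub> inv\<^bsub>GCp\<^esub> (a, c') \<in> S"
    using S ac by (simp add: subgroup.m_closed subgroup.m_inv_closed)
  also have "(a, c) \<otimes>\<^bsub>GCp\<^esub> inv\<^bsub>GCp\<^esub> (a, c') = (\<one>, (c - c') mod int p)"
    using carr by (simp add: inv_DirProd is_group mod_add_right_eq)
  finally have "(\<one>, (c - c') mod int p) \<in> S" .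
  moreover have "(c - c') mod int p \<noteq> 0"
  proof
    assume "(c - c') mod int p = 0"
    then have "c mod int p = c' mod int p"
      by (simp add: mod_eq_dvd_iff mod_eq_0_iff_dvd)
    then show False
      using carr \<open>c \<noteq> c'\<close> by (simp add: carrier_Cp)
  qed
  moreover have "(c - c') mod int p \<in> carrier Cp"
    using prime_gt_0_nat[OF prime_p] by (simp add: carrier_Cp)
  ultimately show False
    using zeta_mem_if_central_mem[OF S] zeta by blast
qed

lemma graph_subgroup_if_zeta_notin:
  assumes S: "subgroup S GCp" and zeta: "zeta \<notin> S"
  shows "S \<in> graph_subgroups G Cp"
proof -
  define K where "K = fst ` S"
  define \<rho> where "\<rho> k = (THE c. (k, c) \<in> S)" for k
  have KG: "subgroup K G"
    unfolding K_def using S by (rule fst_image_subgroup)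
  have S_eq: "S = {(k, \<rho> k) | k. k \<in> K}"
    unfolding K_def \<rho>_def by (rule eq_graph_of_THE) (rule snd_unique_if_zeta_notin[OF S zeta])
  have graph_mem: "(k, \<rho> k) \<in> S" if "k \<in> K" for k
    using that S_eq by blast
  have "\<rho> \<in> hom (G\<lparr>carrier := K\<rparr>) Cp"
  proof (rule homI)
    fix k assume "k \<in> carrier (G\<lparr>carrier := K\<rparr>)"
    then show "\<rho> k \<in> carrier Cp" using subgroup_mem_carrier[OF S graph_mem] by simp
  next
    fix k1 k2 assume "k1 \<in> carrier (G\<lparr>carrier := K\<rparr>)" "k2 \<in> carrier (G\<lparr>carrier := K\<rparr>)"
    then have k: "k1 \<in> K" "k2 \<in> K" by simp_all
    have "(k1 \<otimes> k2, \<rho> k1 \<otimes>\<^bsub>Cp\<^esub> \<rho> k2) \<in> S"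
      using subgroup.m_closed[OF S graph_mem[OF k(1)] graph_mem[OF k(2)]] by simp
    with graph_mem[OF subgroup.m_closed[OF KG k]]
    show "\<rho> (k1 \<otimes>\<^bsub>G\<lparr>carrier := K\<rparr>\<^esub> k2) = \<rho> k1 \<otimes>\<^bsub>Cp\<^esub> \<rho> k2"
      by (simp add: snd_unique_if_zeta_notin[OF S zeta])
  qed
  then show ?thesis
    unfolding graph_subgroups_def using S_eq KG by blast
qed

lemma zeta_notin_graph_subgroup:
  assumes "S \<in> graph_subgroups G Cp"
  shows "zeta \<notin> S"
proof
  assume "zeta \<in> S"
  obtain K \<rho> where S: "S = {(k, \<rho> k) | k. k \<in> K}" and K: "subgroup K G"
    and hom: "\<rho> \<in> hom (G\<lparr>carrier := K\<rparr>) Cp"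
    using assms unfolding graph_subgroups_def by blast
  have "group_hom (G\<lparr>carrier := K\<rparr>) Cp \<rho>"
    using subgroup.subgroup_is_group[OF K is_group] hom
    by (simp add: group_hom_def group_hom_axioms_def)
  then have "\<rho> \<one> = 0"
    using group_hom.hom_one by fastforce
  moreover have "\<rho> \<one> = 1" using \<open>zeta \<in> S\<close> S by auto
  ultimately show False by simp
qed

lemma bij_betw_subgroups_over_Cp:
  "bij_betw (\<lambda>K. K \<times> carrier Cp) (subgroups G) subgroups_over_Cp"
proof (rule bij_betw_imageI)
  show "inj_on (\<lambda>K. K \<times> carrier Cp) (subgroups G)"
    unfolding inj_on_def using Times_eq_cancel2[OF one_in_carrier_Cp] by blast
  show "(\<lambda>K. K \<times> carrier Cp) ` subgroups G = subgroups_over_Cp"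
  proof (intro equalityI subsetI)
    fix S assume "S \<in> (\<lambda>K. K \<times> carrier Cp) ` subgroups G"
    then obtain K where "subgroup K G" "S = K \<times> carrier Cp" by (auto simp: subgroups_def)
    then show "S \<in> subgroups_over_Cp"
      using DirProd_subgroups[OF is_group _ group_integer_mod_group
          group.subgroup_self[OF group_integer_mod_group]] one_in_carrier_Cp
      by (auto simp: subgroups_def subgroup.one_closed simp del: integer_mod_group_1)
  next
    fix S assume "S \<in> subgroups_over_Cp"
    then show "S \<in> (\<lambda>K. K \<times> carrier Cp) ` subgroups G"
      using subgroup_eq_Times_carrier_Cp fst_image_subgroup by (auto simp: subgroups_def)
  qed
qed

end

section \<open>Brauer relations of $G \<times> C_p$ for an Abelian $p$-group $G$\<close>

locale abelian_p_group = prime_cyclic_extension G p + comm_group G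
  for G :: "('a, 'm) monoid_scheme" (structure) and p +
  assumes finite_carrier: "finite (carrier G)"
    and p_power_order: "\<exists>k. card (carrier G) = p ^ k"
begin

lemma comm_group_GCp: "comm_group GCp"
  using group_GCp by (rule group.group_comm_groupI) (auto simp: m_comm add.commute)

lemma finite_carrier_GCp: "finite (carrier GCp)"
  using finite_carrier by (simp add: carrier_Cp)

lemma brauer_relations_graph_eq:
  "brauer_relations_graph G Cp
    = {f \<in> brauer_relations GCp. \<forall>T\<in>subgroups_over_Cp - {Cp_factor}. f T = 0}"
    (is "_ = ?K")
proof (intro equalityI subsetI)
  fix f assume "f \<in> brauer_relations_graph G Cp"
  then show "f \<in> ?K"
    using zeta_notin_graph_subgroup
    by (auto simp: brauer_relations_graph_def burnside_graph_def)
next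
  fix f assume f: "f \<in> ?K"
  \<comment> \<open>Evaluate the character relation at \<open>zeta\<close>: only subgroups over \<open>C_p\<close> contain it.\<close>
  have "f Cp_factor = 0"
    using f comm_group.brauer_relation_vanishes_at[OF comm_group_GCp finite_carrier_GCp _
        subgroup_Cp_factor zeta_in_Cp_factor]
    by (auto simp: subgroups_def)
  have "f S = 0" if "S \<notin> graph_subgroups G Cp" for S
  proof (cases "S \<in> subgroups GCp")
    case True
    then have "zeta \<in> S"
      using graph_subgroup_if_zeta_notin that by (auto simp: subgroups_def)
    then show ?thesis using f True \<open>f Cp_factor = 0\<close> by blast
  next
    case False
    then show ?thesis using f by (simp add: brauer_relations_def burnside_def)
  qed
  then show "f \<in> brauer_relations_graph G Cp"
    using f by (auto simp: brauer_relations_graph_def burnside_graph_def brauer_relations_def)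
qed

lemma p_dvd_ord:
  assumes "a \<in> carrier G" "a \<noteq> \<one>"
  shows "p dvd ord a"
proof -
  obtain k where "card (carrier G) = p ^ k" using p_power_order by blast
  then have "ord a dvd p ^ k" using ord_dvd_group_order[OF assms(1)] by (simp add: order_def)
  then obtain i where "ord a = p ^ i" using divides_primepow_nat[OF prime_p] by blast
  moreover have "ord a \<noteq> 1" using ord_eq_1[OF assms(1)] assms(2) by simp
  ultimately show ?thesis by (cases i) auto
qed

lemma zeta_notin_cyclic_subgroup:
  assumes x: "x \<in> carrier GCp" "fst x \<noteq> \<one>"
  shows "zeta \<notin> generate GCp {x}"
proof
  assume "zeta \<in> generate GCp {x}"
  then obtain k :: nat where k: "zeta = x [^]\<^bsub>GCp\<^esub> k"
    using group.generate_pow_on_finite_carrier[OF group_GCp finite_carrier_GCp x(1)] by blast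
  obtain a c where ac: "x = (a, c)" by (cases x)
  then have "a [^] k = \<one>" "(int k * c) mod int p = 1"
    using k by (simp_all add: DirProd_nat_pow)
  moreover have "a \<in> carrier G" "a \<noteq> \<one>" using x ac by auto
  ultimately have "p dvd k"
    using p_dvd_ord pow_eq_id dvd_trans by blast
  then show False
    using \<open>(int k * c) mod int p = 1\<close> by (auto simp: mult.commute)
qed

lemma Union_zeta_free_subgroups:
  assumes T: "subgroup T GCp" "zeta \<in> T"
  shows "\<Union>{H \<in> subgroups GCp. H \<subseteq> T \<and> zeta \<notin> H} = {x \<in> T. fst x \<noteq> \<one> \<or> snd x = 0}"
proof (intro equalityI subsetI)
  fix x assume "x \<in> \<Union>{H \<in> subgroups GCp. H \<subseteq> T \<and> zeta \<notin> H}"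
  then obtain H where H: "subgroup H GCp" "H \<subseteq> T" "zeta \<notin> H" "x \<in> H"
    by (auto simp: subgroups_def)
  have "fst x \<noteq> \<one> \<or> snd x = 0"
    using zeta_mem_if_central_mem[OF H(1), of "snd x"] H(3,4) subgroup_mem_carrier[OF H(1), of "fst x" "snd x"]
    by (cases x) auto
  then show "x \<in> {x \<in> T. fst x \<noteq> \<one> \<or> snd x = 0}" using H by blast
next
  fix x assume x: "x \<in> {x \<in> T. fst x \<noteq> \<one> \<or> snd x = 0}"
  then have xc: "x \<in> carrier GCp" using subgroup.subset[OF T(1)] by blast
  show "x \<in> \<Union>{H \<in> subgroups GCp. H \<subseteq> T \<and> zeta \<notin> H}"
  proof (cases "fst x = \<one>")
    case False
    have "generate GCp {x} \<in> {H \<in> subgroups GCp. H \<subseteq> T \<and> zeta \<notin> H}"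
      using group.generate_is_subgroup[OF group_GCp] group.generate_subgroup_incl[OF group_GCp _ T(1)]
        zeta_notin_cyclic_subgroup[OF xc False] x xc
      by (auto simp: subgroups_def)
    moreover have "x \<in> generate GCp {x}" by (rule generate.incl) simp
    ultimately show ?thesis by blast
  next
    case True
    then have "x = \<one>\<^bsub>GCp\<^esub>" using x by (cases x) simp
    moreover have "{\<one>\<^bsub>GCp\<^esub>} \<in> {H \<in> subgroups GCp. H \<subseteq> T \<and> zeta \<notin> H}"
      using group.triv_subgroup[OF group_GCp] subgroup.one_closed[OF T(1)] by (auto simp: subgroups_def)
    ultimately show ?thesis by blast
  qed
qed

lemma indicator_zeta_free_Union:
  assumes "subgroup T GCp" "zeta \<in> T" "g \<in> carrier GCp"
  shows "of_bool (g \<in> \<Union>{H \<in> subgroups GCp. H \<subseteq> T \<and> zeta \<notin> H})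
    = of_bool (g \<in> T) - of_bool (g \<in> Cp_factor) + (of_bool (g = \<one>\<^bsub>GCp\<^esub>) :: int)"
  using Union_zeta_free_subgroups[OF assms(1,2)] Cp_factor_subset[OF assms(1,2)]
    subgroup.one_closed[OF assms(1)] assms(3)
  by (cases g) (auto simp: Cp_factor_def)

lemma indicator_over_Cp_expansion:
  assumes T: "subgroup T GCp" "zeta \<in> T"
  obtains w :: "('a \<times> int) set \<Rightarrow> int"
  where "\<And>S. S \<notin> subgroups GCp \<Longrightarrow> w S = 0" and "\<And>S. zeta \<in> S \<Longrightarrow> w S = 0"
    and "\<And>g. g \<in> carrier GCp \<Longrightarrow> of_bool (g \<in> T) - of_bool (g \<in> Cp_factor) + of_bool (g = \<one>\<^bsub>GCp\<^esub>)
      = (\<Sum>S\<in>subgroups GCp. w S * of_bool (g \<in> S))"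
proof -
  define F where "F = {H \<in> subgroups GCp. H \<subseteq> T \<and> zeta \<notin> H}"
  have F_sub: "F \<subseteq> subgroups GCp" by (auto simp: F_def)
  have "finite F" using F_sub finite_subgroups[OF finite_carrier_GCp] by (rule finite_subset)
  moreover have "H \<inter> H' \<in> F" if "H \<in> F" "H' \<in> F" for H H'
    using that group.subgroups_Inter_pair[OF group_GCp] by (auto simp: F_def subgroups_def)
  ultimately obtain w :: "('a \<times> int) set \<Rightarrow> int"
    where w: "\<And>x. of_bool (x \<in> \<Union>F) = (\<Sum>H\<in>F. w H * of_bool (x \<in> H))"
    using indicator_Union_intersection_closed by metis
  show ?thesis
  proof (rule that[of "\<lambda>S. if S \<in> F then w S else 0"])
    fix g assume "g \<in> carrier GCp"
    then have "of_bool (g \<in> T) - of_bool (g \<in> Cp_factor) + of_bool (g = \<one>\<^bsub>GCp\<^esub>)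
        = (\<Sum>H\<in>F. w H * of_bool (g \<in> H))"
      using indicator_zeta_free_Union[OF T] w[of g] by (simp add: F_def)
    also have "\<dots> = (\<Sum>S\<in>F. (if S \<in> F then w S else 0) * of_bool (g \<in> S))"
      by (intro sum.cong) auto
    also have "\<dots> = (\<Sum>S\<in>subgroups GCp. (if S \<in> F then w S else 0) * of_bool (g \<in> S))"
      using F_sub finite_subgroups[OF finite_carrier_GCp] by (intro sum.mono_neutral_left) auto
    finally show "of_bool (g \<in> T) - of_bool (g \<in> Cp_factor) + of_bool (g = \<one>\<^bsub>GCp\<^esub>)
        = (\<Sum>S\<in>subgroups GCp. (if S \<in> F then w S else 0) * of_bool (g \<in> S))" .
  qed (auto simp: F_def)
qed

lemma indicator_relation_separating:
  assumes "T \<in> subgroups_over_Cp - {Cp_factor}"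
  obtains b where "b \<in> burnside GCp"
    and "\<And>g. g \<in> carrier GCp \<Longrightarrow> (\<Sum>S\<in>subgroups GCp. b S * of_bool (g \<in> S)) = 0"
    and "b T = 1" and "\<And>T'. T' \<in> subgroups_over_Cp - {Cp_factor} - {T} \<Longrightarrow> b T' = 0"
proof (rule indicator_over_Cp_expansion)
  show T: "subgroup T GCp" "zeta \<in> T" using assms by (auto simp: subgroups_def)
  fix w :: "('a \<times> int) set \<Rightarrow> int"
  assume w: "\<And>S. S \<notin> subgroups GCp \<Longrightarrow> w S = 0" "\<And>S. zeta \<in> S \<Longrightarrow> w S = 0"
    "\<And>g. g \<in> carrier GCp \<Longrightarrow> of_bool (g \<in> T) - of_bool (g \<in> Cp_factor) + of_bool (g = \<one>\<^bsub>GCp\<^esub>)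
      = (\<Sum>S\<in>subgroups GCp. w S * of_bool (g \<in> S))"
  define b where "b S = of_bool (S = T) - of_bool (S = Cp_factor) + of_bool (S = {\<one>\<^bsub>GCp\<^esub>}) - w S"
    for S
  have subgroups: "T \<in> subgroups GCp" "Cp_factor \<in> subgroups GCp" "{\<one>\<^bsub>GCp\<^esub>} \<in> subgroups GCp"
    using T(1) subgroup_Cp_factor group.triv_subgroup[OF group_GCp] by (auto simp: subgroups_def)
  show thesis
  proof (rule that)
    show "b \<in> burnside GCp"
      using subgroups w(1) by (auto simp: b_def burnside_def)
    fix g assume g: "g \<in> carrier GCp"
    have "b S * of_bool (g \<in> S) = (if S = T then of_bool (g \<in> T) else 0)
        - (if S = Cp_factor then of_bool (g \<in> Cp_factor) else 0)
        + (if S = {\<one>\<^bsub>GCp\<^esub>} then of_bool (g = \<one>\<^bsub>GCp\<^esub>) else 0) - w S * of_bool (g \<in> S)" for S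
      by (simp add: b_def algebra_simps)
    then show "(\<Sum>S\<in>subgroups GCp. b S * of_bool (g \<in> S)) = 0"
      using subgroups finite_subgroups[OF finite_carrier_GCp] w(3)[OF g]
      by (simp add: sum.distrib sum_subtractf sum.delta)
  next
    show "b T = 1" using assms w(2) by (auto simp: b_def)
  next
    fix T' assume "T' \<in> subgroups_over_Cp - {Cp_factor} - {T}"
    then show "b T' = 0" using w(2) by (auto simp: b_def)
  qed
qed

lemma brauer_relation_separating:
  assumes "T \<in> subgroups_over_Cp - {Cp_factor}"
  shows "\<exists>e\<in>brauer_relations GCp. e T \<noteq> 0 \<and>
    (\<forall>T'\<in>subgroups_over_Cp - {Cp_factor} - {T}. e T' = 0)"
proof (rule indicator_relation_separating[OF assms])
  fix b assume b: "b \<in> burnside GCp"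
    "\<And>g. g \<in> carrier GCp \<Longrightarrow> (\<Sum>S\<in>subgroups GCp. b S * of_bool (g \<in> S)) = 0"
    "b T = 1" "\<And>T'. T' \<in> subgroups_over_Cp - {Cp_factor} - {T} \<Longrightarrow> b T' = 0"
  have "(\<lambda>S. b S * int (card S)) \<in> brauer_relations GCp"
    by (rule comm_group.brauer_relation_of_indicator_relation[OF comm_group_GCp finite_carrier_GCp b(1,2)])
  then show ?thesis
  proof (rule bexI[rotated])
    have "card T > 0"
      using assms subgroup.finite_imp_card_positive[OF _ finite_carrier_GCp] by (auto simp: subgroups_def)
    then show "b T * int (card T) \<noteq> 0 \<and>
        (\<forall>T'\<in>subgroups_over_Cp - {Cp_factor} - {T}. b T' * int (card T') = 0)"
      using b(3,4) by simp
  qed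
qed

end

theorem proposition4p5:
  fixes G :: "('a, 'm) monoid_scheme" and p :: nat
  assumes "Factorial_Ring.prime p"
    and "comm_group G"
    and "finite (carrier G)"
    and "\<exists>k. card (carrier G) = p ^ k"
  shows "int (zrank (brauer_relations (G \<times>\<times> integer_mod_group p)))
           - int (zrank (brauer_relations_graph G (integer_mod_group p)))
         = int (card (subgroups G)) - 1"
proof -
  interpret abelian_p_group G p
    using assms by (simp add: abelian_p_group_def abelian_p_group_axioms_def
        prime_cyclic_extension_def prime_cyclic_extension_axioms_def comm_group_def group_def
        comm_monoid_def)
  interpret brauer: z_submodule "brauer_relations GCp" "subgroups GCp"
    using finite_carrier_GCp by (rule z_submodule_brauer_relations)
  let ?P = "subgroups_over_Cp - {Cp_factor}"
  have "finite ?P"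
    using finite_subgroups[OF finite_carrier_GCp] by simp
  then have "zrank (brauer_relations GCp) = zrank (brauer_relations_graph G Cp) + card ?P"
    unfolding brauer_relations_graph_eq
    by (rule brauer.zrank_eq_zrank_vanishing_add_card) (rule brauer_relation_separating)
  moreover have "card ?P = card (subgroups G) - 1"
    using bij_betw_same_card[OF bij_betw_subgroups_over_Cp] subgroup_Cp_factor zeta_in_Cp_factor
    by (simp add: subgroups_def)
  moreover have "card (subgroups G) \<ge> 1"
    using finite_subgroups[OF finite_carrier] triv_subgroup
    by (metis One_nat_def Suc_leI card_gt_0_iff empty_iff mem_Collect_eq subgroups_def)
  ultimately show ?thesis by simp
qed

end
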